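(* Let $Y\subset X$ be a subspace of the reflection space $X$. Then the natural map $\mathrm{Trans}(X)|_{Y}\to \mathrm{Trans}(Y)$ has central kernel.
   Context: A reflection space is a topological space $X$ with continuous $\mu:X\times X\to X$, $(x,y)\mapsto x.y$, satisfying $x.x=x$, $x.(x.y)=y$, $x.(y.z)=(x.y).(x.z)$; it is pointed with base point $o$, and $Y$ is a pointed sub-reflection space containing $o$. The elementary reflection at $x$ is $s_x:y\mapsto x.y$. $\mathrm{Trans}(Y)$ is the group generated by the $s_y\circ s_o$, $y\in Y$ (acting on $Y$), and $\mathrm{Trans}(X)|_{Y}:=\langle s_{y}\circ s_o\in\mathrm{Trans}(X)\mid y\in Y\rangle$ is the subgroup of $\mathrm{Trans}(X)$ generated by the corresponding maps on $X$. The natural map is induced by $s_{y}\circ s_o\mapsto s_y\circ s_o$ (restriction of the action to $Y$). *)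

theory Defs
  imports "HOL-Analysis.Analysis" "HOL-Algebra.Bij" "HOL-Algebra.Generated_Groups"
begin

definition reflection_space :: "('a::topological_space \<Rightarrow> 'a \<Rightarrow> 'a) \<Rightarrow> bool" where
  "reflection_space mu \<longleftrightarrow>
     continuous_on UNIV (\<lambda>p. mu (fst p) (snd p)) \<and>
     (\<forall>x. mu x x = x) \<and>
     (\<forall>x y. mu x (mu x y) = y) \<and>
     (\<forall>x y z. mu x (mu y z) = mu (mu x y) (mu x z))"

definition sub_reflection_space :: "('a \<Rightarrow> 'a \<Rightarrow> 'a) \<Rightarrow> 'a \<Rightarrow> 'a set \<Rightarrow> bool" where
  "sub_reflection_space mu b Y \<longleftrightarrow> b \<in> Y \<and> (\<forall>x\<in>Y. \<forall>y\<in>Y. mu x y \<in> Y)"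

definition srefl :: "('a \<Rightarrow> 'a \<Rightarrow> 'a) \<Rightarrow> 'a \<Rightarrow> 'a \<Rightarrow> 'a" where
  "srefl mu x = (\<lambda>y. mu x y)"

definition TransX_on :: "('a \<Rightarrow> 'a \<Rightarrow> 'a) \<Rightarrow> 'a \<Rightarrow> 'a set \<Rightarrow> ('a \<Rightarrow> 'a) set" where
  "TransX_on mu b Y = generate (BijGroup UNIV) {srefl mu y \<circ> srefl mu b | y. y \<in> Y}"

definition TransY :: "('a \<Rightarrow> 'a \<Rightarrow> 'a) \<Rightarrow> 'a \<Rightarrow> 'a set \<Rightarrow> ('a \<Rightarrow> 'a) set" where
  "TransY mu b Y = generate (BijGroup Y) {restrict (srefl mu y \<circ> srefl mu b) Y | y. y \<in> Y}"

definition nat_map :: "'a set \<Rightarrow> ('a \<Rightarrow> 'a) \<Rightarrow> ('a \<Rightarrow> 'a)" where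
  "nat_map Y g = restrict g Y"

definition nat_kernel :: "('a \<Rightarrow> 'a \<Rightarrow> 'a) \<Rightarrow> 'a \<Rightarrow> 'a set \<Rightarrow> ('a \<Rightarrow> 'a) set" where
  "nat_kernel mu b Y = {g \<in> TransX_on mu b Y. nat_map Y g = \<one>\<^bsub>BijGroup Y\<^esub>}"

end

theory Submission
  imports Defs
begin

text \<open>Every element of Trans(X) is an automorphism of the reflection structure, and an element k
  of the kernel moreover fixes Y pointwise, in particular the base point o. Hence
  k (y.(o.x)) = (k y).((k o).(k x)) = y.(o.(k x)) for y in Y, i.e. k commutes with the generators
  of Trans(X)|_Y and therefore, its centraliser being a subgroup, with the whole group.\<close>

lemma (in group) subgroup_centralizer:
  assumes "a \<in> carrier G"
  shows "subgroup {x \<in> carrier G. a \<otimes> x = x \<otimes> a} G"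
proof (rule subgroupI)
  fix x assume "x \<in> {x \<in> carrier G. a \<otimes> x = x \<otimes> a}"
  then have x: "x \<in> carrier G" "a \<otimes> x = x \<otimes> a" by auto
  have "a \<otimes> inv x = inv x \<otimes> (x \<otimes> a) \<otimes> inv x"
    using x assms by (simp flip: m_assoc)
  also have "\<dots> = inv x \<otimes> (a \<otimes> x) \<otimes> inv x"
    by (simp only: x(2))
  also have "\<dots> = inv x \<otimes> a"
    using x assms by (metis m_assoc m_closed inv_closed r_inv r_one)
  finally show "inv x \<in> {x \<in> carrier G. a \<otimes> x = x \<otimes> a}"
    using x by simp
next
  fix x y
  assume "x \<in> {x \<in> carrier G. a \<otimes> x = x \<otimes> a}" "y \<in> {x \<in> carrier G. a \<otimes> x = x \<otimes> a}"
  then have x: "x \<in> carrier G" "a \<otimes> x = x \<otimes> a" and y: "y \<in> carrier G" "a \<otimes> y = y \<otimes> a"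
    by auto
  then have "a \<otimes> (x \<otimes> y) = x \<otimes> y \<otimes> a"
    using assms by (metis m_assoc)
  then show "x \<otimes> y \<in> {x \<in> carrier G. a \<otimes> x = x \<otimes> a}"
    using x y by simp
qed (use assms in auto)

lemma (in group) commute_generate:
  assumes "a \<in> carrier G" "S \<subseteq> carrier G" "\<And>s. s \<in> S \<Longrightarrow> a \<otimes> s = s \<otimes> a"
    and "g \<in> generate G S"
  shows "a \<otimes> g = g \<otimes> a"
proof -
  have "generate G S \<subseteq> {x \<in> carrier G. a \<otimes> x = x \<otimes> a}"
    using assms by (intro generate_subgroup_incl subgroup_centralizer) auto
  with assms(4) show ?thesis by auto
qed

lemma carrier_BijGroup_UNIV: "carrier (BijGroup UNIV) = {f. bij f}"
  by (auto simp: BijGroup_def Bij_def)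

lemma mult_BijGroup_UNIV: "bij f \<Longrightarrow> bij g \<Longrightarrow> f \<otimes>\<^bsub>BijGroup UNIV\<^esub> g = f \<circ> g"
  by (auto simp: BijGroup_def Bij_def compose_def)

lemma one_BijGroup_UNIV: "\<one>\<^bsub>BijGroup UNIV\<^esub> = id"
  by (auto simp: BijGroup_def)

lemma inv_BijGroup_UNIV: "bij f \<Longrightarrow> inv\<^bsub>BijGroup UNIV\<^esub> f = inv_into UNIV f"
  by (simp add: inv_BijGroup Bij_def restrict_def)

definition reflection_auts :: "('a \<Rightarrow> 'a \<Rightarrow> 'a) \<Rightarrow> ('a \<Rightarrow> 'a) set" where
  "reflection_auts mu = {f. bij f \<and> (\<forall>x z. f (mu x z) = mu (f x) (f z))}"

lemma comp_in_reflection_auts: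
  "f \<in> reflection_auts mu \<Longrightarrow> g \<in> reflection_auts mu \<Longrightarrow> f \<circ> g \<in> reflection_auts mu"
  by (auto simp: reflection_auts_def intro: bij_comp)

lemma subgroup_reflection_auts: "subgroup (reflection_auts mu) (BijGroup UNIV)"
proof (rule group.subgroupI[OF group_BijGroup])
  fix f assume "f \<in> reflection_auts mu"
  then have f: "bij f" "\<And>x z. f (mu x z) = mu (f x) (f z)"
    by (auto simp: reflection_auts_def)
  have "inv_into UNIV f (mu x z) = mu (inv_into UNIV f x) (inv_into UNIV f z)" for x z
  proof (rule inv_f_eq)
    show "inj f" using f(1) by (rule bij_is_inj)
    show "f (mu (inv_into UNIV f x) (inv_into UNIV f z)) = mu x z"
      using f by (simp add: bij_is_surj surj_f_inv_f)
  qed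
  with f show "inv\<^bsub>BijGroup UNIV\<^esub> f \<in> reflection_auts mu"
    by (simp add: inv_BijGroup_UNIV reflection_auts_def bij_imp_bij_inv)
next
  fix f g assume fg: "f \<in> reflection_auts mu" "g \<in> reflection_auts mu"
  then have "f \<otimes>\<^bsub>BijGroup UNIV\<^esub> g = f \<circ> g"
    by (intro mult_BijGroup_UNIV) (auto simp: reflection_auts_def)
  with fg show "f \<otimes>\<^bsub>BijGroup UNIV\<^esub> g \<in> reflection_auts mu"
    by (simp add: comp_in_reflection_auts)
qed (auto simp: reflection_auts_def carrier_BijGroup_UNIV one_BijGroup_UNIV)

lemma srefl_in_reflection_auts:
  assumes "reflection_space mu"
  shows "srefl mu y \<in> reflection_auts mu"
proof -
  have "mu y (mu y x) = x" for x
    using assms unfolding reflection_space_def by blast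
  then have "srefl mu y \<circ> srefl mu y = id"
    unfolding srefl_def comp_def id_def by simp
  then have "bij (srefl mu y)"
    using o_bij by blast
  moreover have "srefl mu y (mu x z) = mu (srefl mu y x) (srefl mu y z)" for x z
    using assms unfolding reflection_space_def srefl_def by blast
  ultimately show ?thesis
    by (simp add: reflection_auts_def)
qed

lemma translations_in_reflection_auts:
  assumes "reflection_space mu"
  shows "{srefl mu y \<circ> srefl mu b | y. y \<in> Y} \<subseteq> reflection_auts mu"
  using comp_in_reflection_auts srefl_in_reflection_auts[OF assms] by blast

lemma TransX_on_subset_reflection_auts:
  assumes "reflection_space mu"
  shows "TransX_on mu b Y \<subseteq> reflection_auts mu"
  unfolding TransX_on_def
  by (rule group.generate_subgroup_incl[OF group_BijGroup translations_in_reflection_auts[OF assms]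
        subgroup_reflection_auts])

lemma reflection_aut_commutes_translation:
  assumes "f \<in> reflection_auts mu" "f y = y" "f b = b"
  shows "f \<circ> (srefl mu y \<circ> srefl mu b) = (srefl mu y \<circ> srefl mu b) \<circ> f"
  using assms by (auto simp: reflection_auts_def srefl_def)

lemma nat_kernel_fixes:
  assumes "k \<in> nat_kernel mu b Y" "y \<in> Y"
  shows "k y = y"
proof -
  have "restrict k Y y = (\<lambda>x\<in>Y. x) y"
    using assms(1) by (simp add: nat_kernel_def nat_map_def BijGroup_def)
  with assms(2) show ?thesis by simp
qed

theorem lemma3p2:
  fixes mu :: "'a::topological_space \<Rightarrow> 'a \<Rightarrow> 'a" and b :: 'a and Y :: "'a set"
  assumes "reflection_space mu"
    and "sub_reflection_space mu b Y"
  shows "\<forall>k \<in> nat_kernel mu b Y. \<forall>g \<in> TransX_on mu b Y.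
           k \<otimes>\<^bsub>BijGroup UNIV\<^esub> g = g \<otimes>\<^bsub>BijGroup UNIV\<^esub> k"
proof (intro ballI)
  fix k g assume k: "k \<in> nat_kernel mu b Y" and g: "g \<in> TransX_on mu b Y"
  have b: "b \<in> Y"
    using assms(2) by (simp add: sub_reflection_space_def)
  have k_aut: "k \<in> reflection_auts mu"
    using k TransX_on_subset_reflection_auts[OF assms(1)] by (auto simp: nat_kernel_def)
  note gens_aut = translations_in_reflection_auts[OF assms(1), of b Y]
  note auts_carrier = subgroup.subset[OF subgroup_reflection_auts, of mu]
  show "k \<otimes>\<^bsub>BijGroup UNIV\<^esub> g = g \<otimes>\<^bsub>BijGroup UNIV\<^esub> k"
  proof (rule group.commute_generate[OF group_BijGroup])
    show "k \<in> carrier (BijGroup UNIV)"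
      using k_aut auts_carrier by blast
    show "{srefl mu y \<circ> srefl mu b |y. y \<in> Y} \<subseteq> carrier (BijGroup UNIV)"
      using gens_aut auts_carrier by blast
    show "g \<in> generate (BijGroup UNIV) {srefl mu y \<circ> srefl mu b |y. y \<in> Y}"
      using g by (simp add: TransX_on_def)
  next
    fix s assume s: "s \<in> {srefl mu y \<circ> srefl mu b |y. y \<in> Y}"
    then obtain y where y: "y \<in> Y" and s_eq: "s = srefl mu y \<circ> srefl mu b"
      by blast
    have "k \<circ> s = s \<circ> k"
      unfolding s_eq
      by (rule reflection_aut_commutes_translation[OF k_aut nat_kernel_fixes[OF k y]
            nat_kernel_fixes[OF k b]])
    moreover have "bij k" "bij s"
      using k_aut s gens_aut by (auto simp: reflection_auts_def)
    ultimately show "k \<otimes>\<^bsub>BijGroup UNIV\<^esub> s = s \<otimes>\<^bsub>BijGroup UNIV\<^esub> k"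
      by (simp add: mult_BijGroup_UNIV)
  qed
qed

end
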